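(* Let $P$ be a well-ordered phaser and suppose $P\to Q$. Then $\neg(Q\prec P)$.
   Context: A view is a record $v=(\mathrm{sp}(v),\mathrm{wp}(v),\mathrm{mode}(v))$ with $\mathrm{sp}(v),\mathrm{wp}(v)\in\mathbb{N}$ and $\mathrm{mode}(v)\in\{\mathtt{SW},\mathtt{SO},\mathtt{WO}\}$. For a view or mode, $\mathrm{CanSignal}$ means the mode is $\mathtt{SW}$ or $\mathtt{SO}$, and $\mathrm{CanWait}$ means the mode is $\mathtt{SW}$ or $\mathtt{WO}$. A phaser $P$ is a finite partial map from task identifiers to views. For views, $v_1\prec v_2$ iff $\mathrm{CanSignal}(v_1)$, $\mathrm{sp}(v_1)<\mathrm{wp}(v_2)$ and $\mathrm{CanWait}(v_2)$; $v_1\unrhd v_2$ iff $\mathrm{mode}(v_1)=\mathtt{WO}$ or $\mathrm{sp}(v_1)\ge\mathrm{wp}(v_2)$ or $\mathrm{mode}(v_2)=\mathtt{SO}$. For phasers, $P\prec Q$ iff there exist $t\in\mathrm{dom}\,P$, $t'\in\mathrm{dom}\,Q$ with $P(t)\prec Q(t')$; $P\unrhd Q$ iff $P(t)\unrhd Q(t')$ for all $t\in\mathrm{dom}\,P$, $t'\in\mathrm{dom}\,Q$. $P$ is well-ordered iff $P\unrhd P$. Reduction $P\to_t^{o}Q$ is defined by four rules. Signal: if $P(t)=v$, $\mathrm{CanSignal}(v)$, and ($\mathrm{mode}(v)=\mathtt{SW}\Rightarrow\mathrm{wp}(v)=\mathrm{sp}(v)$), then $Q=P[t\mapsto v']$ with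 $v'$ equal to $v$ except $\mathrm{sp}(v')=\mathrm{sp}(v)+1$. Wait: if $P(t)=v$, $\mathrm{CanWait}(v)$, ($\mathrm{mode}(v)=\mathtt{SW}\Rightarrow\mathrm{wp}(v)+1=\mathrm{sp}(v)$), and $\mathrm{Sync}(P,t)$, meaning that every $t'\in\mathrm{dom}\,P$ with $\mathrm{CanSignal}(P(t'))$ has $\mathrm{sp}(P(t'))>\mathrm{wp}(v)$, then $Q=P[t\mapsto v']$ with $v'$ equal to $v$ except $\mathrm{wp}(v')=\mathrm{wp}(v)+1$. Register$(t',r)$: if $t'\notin\mathrm{dom}\,P$, $P(t)=v$, ($\mathrm{CanWait}(r)\Rightarrow\mathrm{CanWait}(v)$) and ($\mathrm{CanSignal}(r)\Rightarrow\mathrm{CanSignal}(v)$), then $Q=P[t'\mapsto(\mathrm{sp}(v),\mathrm{wp}(v),r)]$. Drop: if $t\in\mathrm{dom}\,P$, then $Q$ is $P$ with $t$ removed. $P\to Q$ means $P\to_t^{o}Q$ for some $t,o$. *)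

theory Defs
  imports Main
begin

datatype mode = SW | SO | WO

record view =
  sp :: nat
  wp :: nat
  vmode :: mode

definition CanSignal :: "mode \<Rightarrow> bool" where
  "CanSignal m \<longleftrightarrow> m = SW \<or> m = SO"

definition CanWait :: "mode \<Rightarrow> bool" where
  "CanWait m \<longleftrightarrow> m = SW \<or> m = WO"

type_synonym 'tid phaser = "'tid \<rightharpoonup> view"

definition view_lt :: "view \<Rightarrow> view \<Rightarrow> bool" where
  "view_lt v1 v2 \<longleftrightarrow> CanSignal (vmode v1) \<and> sp v1 < wp v2 \<and> CanWait (vmode v2)"

definition view_ge :: "view \<Rightarrow> view \<Rightarrow> bool" where
  "view_ge v1 v2 \<longleftrightarrow> vmode v1 = WO \<or> sp v1 \<ge> wp v2 \<or> vmode v2 = SO"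

definition ph_lt :: "'tid phaser \<Rightarrow> 'tid phaser \<Rightarrow> bool" where
  "ph_lt P Q \<longleftrightarrow> (\<exists>t t' v v'. P t = Some v \<and> Q t' = Some v' \<and> view_lt v v')"

definition ph_ge :: "'tid phaser \<Rightarrow> 'tid phaser \<Rightarrow> bool" where
  "ph_ge P Q \<longleftrightarrow> (\<forall>t t' v v'. P t = Some v \<longrightarrow> Q t' = Some v' \<longrightarrow> view_ge v v')"

definition well_ordered :: "'tid phaser \<Rightarrow> bool" where
  "well_ordered P \<longleftrightarrow> ph_ge P P"

definition Sync :: "'tid phaser \<Rightarrow> 'tid \<Rightarrow> bool" where
  "Sync P t \<longleftrightarrow> (\<forall>t' v'. P t' = Some v' \<longrightarrow> CanSignal (vmode v') \<longrightarrow>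
      sp v' > wp (the (P t)))"

datatype 'tid op = OSignal | OWait | ORegister 'tid mode | ODrop

inductive reduces :: "'tid phaser \<Rightarrow> 'tid \<Rightarrow> 'tid op \<Rightarrow> 'tid phaser \<Rightarrow> bool" where
  signal: "\<lbrakk> P t = Some v; CanSignal (vmode v); vmode v = SW \<longrightarrow> wp v = sp v \<rbrakk>
     \<Longrightarrow> reduces P t OSignal (P(t \<mapsto> v\<lparr>sp := Suc (sp v)\<rparr>))"
| wait: "\<lbrakk> P t = Some v; CanWait (vmode v); vmode v = SW \<longrightarrow> Suc (wp v) = sp v; Sync P t \<rbrakk>
     \<Longrightarrow> reduces P t OWait (P(t \<mapsto> v\<lparr>wp := Suc (wp v)\<rparr>))"
| register: "\<lbrakk> t' \<notin> dom P; P t = Some v; CanWait r \<longrightarrow> CanWait (vmode v);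
              CanSignal r \<longrightarrow> CanSignal (vmode v) \<rbrakk>
     \<Longrightarrow> reduces P t (ORegister t' r) (P(t' \<mapsto> \<lparr>sp = sp v, wp = wp v, vmode = r\<rparr>))"
| drop: "t \<in> dom P \<Longrightarrow> reduces P t ODrop (P(t := None))"

definition step :: "'tid phaser \<Rightarrow> 'tid phaser \<Rightarrow> bool" where
  "step P Q \<longleftrightarrow> (\<exists>t a. reduces P t a Q)"

end

theory Submission
  imports Defs
begin

text \<open>A reduction never creates a signalling view whose signal phase is below those of all
  signalling views already present: signal and wait only increase phases, drop removes views,
  and a registered signaller copies the phases of its (signalling) parent. So a view of \<open>Q\<close>
  that signals before some waiter of \<open>P\<close> yields a signaller of \<open>P\<close> that does so too,
  contradicting \<open>P \<unrhd> P\<close>.\<close>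

lemma reduces_signaller_sp_lower_bound:
  assumes "reduces P t a Q" and "Q x = Some w" and "CanSignal (vmode w)"
  obtains y u where "P y = Some u" and "CanSignal (vmode u)" and "sp u \<le> sp w"
  using assms
proof (induction rule: reduces.induct)
  case (signal P t v)
  then show ?case by (cases "x = t") auto
next
  case (wait P t v)
  then show ?case by (cases "x = t") auto
next
  case (register t' P t v r)
  then show ?case by (cases "x = t'") (auto simp: domIff split: if_splits)
next
  case (drop t P)
  then show ?case by (cases "x = t") auto
qed

lemma view_ge_signaller_not_view_lt:
  assumes "view_ge u v" and "CanSignal (vmode u)" and "sp u \<le> sp w"
  shows "\<not> view_lt w v"
  using assms unfolding view_ge_def view_lt_def CanSignal_def CanWait_def by auto

theorem theorem2:
  fixes P Q :: "'tid phaser"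
  assumes "finite (dom P)"
    and "well_ordered P"
    and "step P Q"
  shows "\<not> ph_lt Q P"
proof
  assume "ph_lt Q P"
  then obtain x w t' v where w: "Q x = Some w" and v: "P t' = Some v" and "view_lt w v"
    unfolding ph_lt_def by blast
  from assms(3) obtain t a where "reduces P t a Q"
    unfolding step_def by blast
  moreover from \<open>view_lt w v\<close> have "CanSignal (vmode w)"
    unfolding view_lt_def by blast
  ultimately obtain y u where u: "P y = Some u" "CanSignal (vmode u)" "sp u \<le> sp w"
    using w by (blast elim: reduces_signaller_sp_lower_bound)
  from assms(2) u(1) v have "view_ge u v"
    unfolding well_ordered_def ph_ge_def by blast
  from this u(2,3) have "\<not> view_lt w v"
    by (rule view_ge_signaller_not_view_lt)
  with \<open>view_lt w v\<close> show False by contradiction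
qed

end
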